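(* Let $B$ be a triangular-block of a $2$-connected plane graph $G$, and let $F_1$ and $F_2$ be distinct facial cycles of $B$ that each have length at least four. Then $F_1$ and $F_2$ share at most one vertex.
   Context: A facial triangle of a plane graph $G$ is a face bounded by a triangle. Two facial triangles $F,F'$ are equivalent if there is a sequence $F=F_1,\dots,F_k=F'$ of facial triangles of $G$ such that consecutive ones share an edge. For an edge $e$ of $G$: if $e$ lies in no facial triangle, the triangular-block $B(e)$ is the subgraph consisting of $e$ and its ends; otherwise $B(e)$ is the union of all facial triangles equivalent to some facial triangle containing $e$. A triangular-block is regarded as a plane graph with the embedding inherited from $G$; its facial cycles are the cycles bounding its faces. *)

theory Defs
  imports "HOL-Analysis.Analysis"
begin

text \<open>Plane graphs are modelled geometrically: a finite simple graph with vertex set V and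
edge set E (2-element subsets of V), drawn in the plane (the complex numbers) by an injective
vertex placement pos and, for every edge, an arc joining the images of its ends; arcs meet
vertices only at their ends and meet each other only at common ends.\<close>

definition plane_graph ::
  "'v set \<Rightarrow> 'v set set \<Rightarrow> ('v \<Rightarrow> complex) \<Rightarrow> ('v set \<Rightarrow> real \<Rightarrow> complex) \<Rightarrow> bool" where
  "plane_graph V E pos c \<longleftrightarrow>
     finite V \<and> (\<forall>e\<in>E. e \<subseteq> V \<and> card e = 2) \<and> inj_on pos V \<and>
     (\<forall>e\<in>E. arc (c e) \<and> {pathstart (c e), pathfinish (c e)} = pos ` e \<and>
            path_image (c e) \<inter> pos ` V = pos ` e) \<and>
     (\<forall>e\<in>E. \<forall>e'\<in>E. e \<noteq> e' \<longrightarrow> path_image (c e) \<inter> path_image (c e') = pos ` (e \<inter> e'))"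

definition drawing ::
  "'v set \<Rightarrow> 'v set set \<Rightarrow> ('v \<Rightarrow> complex) \<Rightarrow> ('v set \<Rightarrow> real \<Rightarrow> complex) \<Rightarrow> complex set" where
  "drawing V E pos c = pos ` V \<union> (\<Union>e\<in>E. path_image (c e))"

definition faces ::
  "'v set \<Rightarrow> 'v set set \<Rightarrow> ('v \<Rightarrow> complex) \<Rightarrow> ('v set \<Rightarrow> real \<Rightarrow> complex) \<Rightarrow> complex set set" where
  "faces V E pos c = components (- drawing V E pos c)"

definition connected_graph :: "'v set \<Rightarrow> 'v set set \<Rightarrow> bool" where
  "connected_graph V E \<longleftrightarrow>
     (\<forall>x\<in>V. \<forall>y\<in>V. (\<lambda>a b. {a, b} \<in> E \<and> a \<in> V \<and> b \<in> V)\<^sup>*\<^sup>* x y)"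

definition two_connected :: "'v set \<Rightarrow> 'v set set \<Rightarrow> bool" where
  "two_connected V E \<longleftrightarrow> card V \<ge> 3 \<and> connected_graph V E \<and>
     (\<forall>x\<in>V. connected_graph (V - {x}) {e\<in>E. x \<notin> e})"

definition is_cycle :: "'v set \<Rightarrow> 'v set set \<Rightarrow> bool" where
  "is_cycle W D \<longleftrightarrow> finite W \<and> card W \<ge> 3 \<and> (\<forall>e\<in>D. e \<subseteq> W \<and> card e = 2) \<and>
     (\<forall>v\<in>W. card {e\<in>D. v \<in> e} = 2) \<and> connected_graph W D"

definition facial_cycle ::
  "'v set \<Rightarrow> 'v set set \<Rightarrow> ('v \<Rightarrow> complex) \<Rightarrow> ('v set \<Rightarrow> real \<Rightarrow> complex) \<Rightarrow>
   'v set \<Rightarrow> 'v set set \<Rightarrow> bool" where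
  "facial_cycle V E pos c W D \<longleftrightarrow> W \<subseteq> V \<and> D \<subseteq> E \<and> is_cycle W D \<and>
     (\<exists>f\<in>faces V E pos c. frontier f = drawing W D pos c)"

definition tri_edges :: "'v set \<Rightarrow> 'v set set" where
  "tri_edges T = {e. e \<subseteq> T \<and> card e = 2}"

definition facial_triangle ::
  "'v set \<Rightarrow> 'v set set \<Rightarrow> ('v \<Rightarrow> complex) \<Rightarrow> ('v set \<Rightarrow> real \<Rightarrow> complex) \<Rightarrow> 'v set \<Rightarrow> bool" where
  "facial_triangle V E pos c T \<longleftrightarrow> card T = 3 \<and> facial_cycle V E pos c T (tri_edges T)"

definition tri_equiv ::
  "'v set \<Rightarrow> 'v set set \<Rightarrow> ('v \<Rightarrow> complex) \<Rightarrow> ('v set \<Rightarrow> real \<Rightarrow> complex) \<Rightarrow>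
   'v set \<Rightarrow> 'v set \<Rightarrow> bool" where
  "tri_equiv V E pos c T T' \<longleftrightarrow> facial_triangle V E pos c T \<and>
     (\<lambda>A B. facial_triangle V E pos c A \<and> facial_triangle V E pos c B \<and>
            tri_edges A \<inter> tri_edges B \<noteq> {})\<^sup>*\<^sup>* T T'"

definition tri_block ::
  "'v set \<Rightarrow> 'v set set \<Rightarrow> ('v \<Rightarrow> complex) \<Rightarrow> ('v set \<Rightarrow> real \<Rightarrow> complex) \<Rightarrow>
   'v set \<Rightarrow> 'v set \<times> 'v set set" where
  "tri_block V E pos c e =
     (if \<not> (\<exists>T. facial_triangle V E pos c T \<and> e \<in> tri_edges T) then (e, {e})
      else (let Ts = {T'. \<exists>T. facial_triangle V E pos c T \<and> e \<in> tri_edges T \<and>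
                              tri_equiv V E pos c T T'}
            in (\<Union>Ts, \<Union>(tri_edges ` Ts))))"

end

theory Submission
  imports Defs
begin

text \<open>Suppose two distinct faces f1, f2 of the block B both have u \<noteq> v on their boundaries. Let S
  and T be the drawings of B - u and B - v. Since u is not in S, the set f1 \<union> {u} \<union> f2 is connected
  and misses S; likewise v joins f1 to f2 off T. The intersection of S and T, the drawing of
  B - {u, v}, is connected because consecutive triangles of the block share an edge and hence a
  vertex other than u and v. By Janiszewski's theorem f1 and f2 are then joined off S \<union> T, which
  covers B unless uv is an edge of B, contradicting f1 \<noteq> f2. If uv is an edge, its arc is cut at
  its midpoint m and each half is added to the side missing the end it avoids; for every
  triangle uvw of B a continuum through the face of that triangle joins w to m and restores the
  connectedness of the intersection. These triangle faces miss f1 and f2: a face of B containing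
  one of them has that triangle on its boundary, which is impossible for a cycle of length at
  least four.\<close>

section \<open>Arcs, frontiers and Janiszewski's theorem\<close>

lemma open_frontier_segment_access:
  fixes t :: "'a::euclidean_space set"
  assumes "open t" and "p \<in> frontier t" and "r > 0"
  obtains q z where "q \<in> t" "z \<in> frontier t" "z \<in> ball p r" "closed_segment q z \<subseteq> insert z t"
proof -
  have "p \<in> closure t" using assms(2) by (simp add: frontier_def)
  then obtain q where q: "q \<in> t" "dist q p < r" using assms(3) closure_approachable by blast
  have segment_ball: "closed_segment q p \<subseteq> ball p r"
    using q(2) assms(3) by (intro closed_segment_subset convex_ball) (auto simp: dist_commute)
  define K where "K = closed_segment q p \<inter> frontier t"
  have "closed K" unfolding K_def by (intro closed_Int closed_segment frontier_closed)
  moreover have "K \<noteq> {}" using assms(2) unfolding K_def by auto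
  \<comment> \<open>z is the point of the frontier on the segment [q,p] nearest to q.\<close>
  ultimately obtain z where z: "z \<in> K" "\<And>y. y \<in> K \<Longrightarrow> dist q z \<le> dist q y"
    using distance_attains_inf by metis
  have t_frontier: "t \<inter> frontier t = {}" using assms(1) by (simp add: frontier_def interior_open)
  have "z \<in> frontier t" "z \<in> closed_segment q p" using z(1) unfolding K_def by auto
  then have "q \<noteq> z" and qz_sub: "closed_segment q z \<subseteq> closed_segment q p"
    using q(1) t_frontier by (auto simp: subset_closed_segment)
  have "y \<in> t" if y: "y \<in> closed_segment q z" "y \<noteq> z" for y
  proof -
    have closer: "dist q y < dist q z"
      using y \<open>q \<noteq> z\<close> dist_in_open_segment[of y q z]
      by (cases "y = q") (auto simp: open_segment_def dist_commute)
    have qy_sub: "closed_segment q y \<subseteq> closed_segment q p"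
      using subsetD[OF qz_sub y(1)] by (simp add: subset_closed_segment)
    have "closed_segment q y \<inter> frontier t = {}"
    proof (rule equals0I)
      fix y' assume y': "y' \<in> closed_segment q y \<inter> frontier t"
      then have "dist q z \<le> dist q y'" using qy_sub z(2) unfolding K_def by blast
      moreover have "dist q y' \<le> dist q y"
        using dist_in_closed_segment[of y' q y] y' by (simp add: dist_commute)
      ultimately show False using closer by simp
    qed
    then show "y \<in> t"
      using connected_Int_frontier[OF connected_segment, of q y t] q(1) by blast
  qed
  then have "closed_segment q z \<subseteq> insert z t" by blast
  then show ?thesis using that q(1) \<open>z \<in> frontier t\<close> \<open>z \<in> closed_segment q p\<close> segment_ball by blast
qed

lemma arc_subcontinuum:
  fixes g :: "real \<Rightarrow> 'a::topological_space"
  assumes "arc g" and "a \<in> path_image g" and "b \<in> path_image g"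
  obtains K where "compact K" "connected K" "a \<in> K" "b \<in> K" "K \<subseteq> path_image g"
    "K \<inter> {pathstart g, pathfinish g} \<subseteq> {a, b}"
proof -
  obtain s s' where s: "s \<in> {0..1}" "a = g s" and s': "s' \<in> {0..1}" "b = g s'"
    using assms(2,3) unfolding path_image_def by blast
  define I where "I = closed_segment s s'"
  have I01: "I \<subseteq> {0..1}" unfolding I_def using s(1) s'(1) by (simp add: closed_segment_subset)
  have inj: "inj_on g {0..1}" and cont: "continuous_on I g"
    using assms(1) I01 unfolding arc_def path_def by (auto intro: continuous_on_subset)
  show ?thesis
  proof (rule that[of "g ` I"])
    show "compact (g ` I)" "connected (g ` I)" unfolding I_def using cont I_def
      by (auto intro: compact_continuous_image connected_continuous_image)
    show "a \<in> g ` I" "b \<in> g ` I" "g ` I \<subseteq> path_image g"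
      unfolding I_def path_image_def using s s' I01 I_def by auto
    show "g ` I \<inter> {pathstart g, pathfinish g} \<subseteq> {a, b}"
    proof (rule subsetI, elim IntE imageE)
      fix x r assume r: "r \<in> I" "x = g r" and "x \<in> {pathstart g, pathfinish g}"
      then have "g r = g 0 \<or> g r = g 1" unfolding pathstart_def pathfinish_def by simp
      then have "r = 0 \<or> r = 1" using inj_onD[OF inj] r(1) I01 by fastforce
      then have "r = s \<or> r = s'"
        using r(1) s(1) s'(1) unfolding I_def closed_segment_eq_real_ivl by (auto split: if_splits)
      then show "x \<in> {a, b}" using r(2) s s' by auto
    qed
  qed
qed

lemma arc_split_at_midpoint:
  fixes g :: "real \<Rightarrow> 'a::topological_space"
  assumes "arc g" and ends: "{pathstart g, pathfinish g} = {a, b}"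
  obtains A B where "compact A" "compact B" "A \<union> B = path_image g" "A \<inter> B = {g (1/2)}"
    "b \<notin> A" "a \<notin> B"
proof -
  have inj: "inj_on g {0..1}" and cont: "continuous_on {0..1} g"
    using assms unfolding arc_def path_def by auto
  define A0 where "A0 = g ` {0..1/2}"
  define A1 where "A1 = g ` {1/2..1}"
  have compact: "compact A0" "compact A1"
    unfolding A0_def A1_def by (auto intro!: compact_continuous_image continuous_on_subset[OF cont])
  have "{0..1/2} \<union> {1/2..1} = {0..1::real}" by auto
  then have union: "A0 \<union> A1 = path_image g"
    unfolding A0_def A1_def path_image_def by (metis image_Un)
  have inter: "A0 \<inter> A1 = {g (1/2)}"
  proof (intro equalityI subsetI)
    fix x assume "x \<in> A0 \<inter> A1"
    then obtain r s where rs: "r \<in> {0..1/2}" "s \<in> {1/2..1}" "x = g r" "x = g s"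
      unfolding A0_def A1_def by auto
    then have "r = s" using inj_onD[OF inj, of r s] by auto
    then have "r = 1/2" using rs(1,2) by auto
    then show "x \<in> {g (1/2)}" using rs(3) by blast
  qed (auto simp: A0_def A1_def)
  have avoid: "pathfinish g \<notin> A0" "pathstart g \<notin> A1"
    using inj_onD[OF inj] unfolding A0_def A1_def pathstart_def pathfinish_def by fastforce+
  from ends consider "pathstart g = a" "pathfinish g = b" | "pathstart g = b" "pathfinish g = a"
    by (auto simp: doubleton_eq_iff)
  then show ?thesis
  proof cases
    case 1
    then show ?thesis using that[of A0 A1] compact union inter avoid by simp
  next
    case 2
    then show ?thesis
      using that[of A1 A0] compact union inter avoid by (simp add: Un_commute Int_commute)
  qed
qed

lemma components_eq_by_Janiszewski:
  fixes S T B :: "complex set"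
  assumes "compact S" and "closed T" and "connected (S \<inter> T)" and "B \<subseteq> S \<union> T"
    and f1: "f1 \<in> components (- B)" and f2: "f2 \<in> components (- B)"
    and "p \<in> closure f1" "p \<in> closure f2" "p \<notin> S"
    and "q \<in> closure f1" "q \<in> closure f2" "q \<notin> T"
    and disj: "(S \<union> T) \<inter> (f1 \<union> f2) = {}"
  shows "f1 = f2"
proof -
  obtain a b where a: "a \<in> f1" and b: "b \<in> f2" using f1 f2 in_components_nonempty by blast
  have bridge: "connected (insert x f1 \<union> insert x f2)" if "x \<in> closure f1" "x \<in> closure f2" for x
  proof (rule connected_Un)
    have "connected (insert x f)" if "f \<in> components (- B)" "x \<in> closure f" for f
      using connected_intermediate_closure[OF in_components_connected[OF that(1)]] that(2)
        closure_subset by blast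
    then show "connected (insert x f1)" "connected (insert x f2)" using that f1 f2 by auto
  qed auto
  have "connected_component (- S) a b"
    unfolding connected_component_def
    by (rule exI[of _ "insert p f1 \<union> insert p f2"]) (use bridge[of p] assms(7-9) disj a b in auto)
  moreover have "connected_component (- T) a b"
    unfolding connected_component_def
    by (rule exI[of _ "insert q f1 \<union> insert q f2"]) (use bridge[of q] assms(10-12) disj a b in auto)
  ultimately have "connected_component (- (S \<union> T)) a b"
    using Janiszewski[OF assms(1-3)] by blast
  then have "connected_component (- B) a b"
    by (rule connected_component_of_subset) (use assms(4) in blast)
  moreover obtain x where "f1 = connected_component_set (- B) x"
    using f1 components_iff by blast
  ultimately have "b \<in> f1"
    using a connected_component_eq by fastforce
  then show ?thesis using b f1 f2 components_nonoverlap by blast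
qed

section \<open>Cycles and triangles\<close>

lemma tri_edges_triple:
  assumes "x \<noteq> y" "y \<noteq> z" "x \<noteq> z"
  shows "tri_edges {x, y, z} = {{x, y}, {x, z}, {y, z}}"
  using assms unfolding tri_edges_def by (auto simp: card_2_iff)

lemma card_3_not_subset_pair: "card T = 3 \<Longrightarrow> \<not> T \<subseteq> {u, v}"
  using card_mono[of "{u, v}" T] card_length[of "[u, v]"] by auto

lemma card_3_eq_insert_pair:
  assumes "card T = 3" "{u, v} \<subseteq> T" "u \<noteq> v"
  obtains w where "T = {u, v, w}" "w \<notin> {u, v}"
proof -
  have "finite T" using assms(1) by (metis card_ge_0_finite zero_less_numeral)
  then have "card (T - {u, v}) = 1" using assms by (simp add: card_Diff_subset)
  then obtain w where "T - {u, v} = {w}" by (rule card_1_singletonE)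
  then show ?thesis using that assms(2) by blast
qed

lemma connected_graph_closed_subset:
  assumes "connected_graph W D" "a \<in> W" "a \<in> T"
    and closed: "\<And>x y. x \<in> T \<Longrightarrow> {x, y} \<in> D \<Longrightarrow> y \<in> T"
  shows "W \<subseteq> T"
proof
  fix y assume "y \<in> W"
  then have "(\<lambda>a b. {a, b} \<in> D \<and> a \<in> W \<and> b \<in> W)\<^sup>*\<^sup>* a y"
    using assms(1,2) unfolding connected_graph_def by blast
  then show "y \<in> T" by induction (use assms(3) closed in blast)+
qed

lemma is_cycle_edges_at_vertex:
  assumes "is_cycle W D" "x \<in> W" "{x, y} \<in> D" "{x, z} \<in> D" "y \<noteq> z"
  shows "{e \<in> D. x \<in> e} = {{x, y}, {x, z}}"
proof -
  have "finite D"
    using assms(1) unfolding is_cycle_def by (metis Pow_iff finite_Pow_iff finite_subset subsetI)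
  moreover have "card {{x, y}, {x, z}} = 2" using assms(5) by (auto simp: doubleton_eq_iff)
  ultimately show ?thesis
    using assms card_subset_eq[of "{e \<in> D. x \<in> e}" "{{x, y}, {x, z}}"] unfolding is_cycle_def by auto
qed

text \<open>Both cycle edges at a vertex of the triangle are triangle edges, so the cycle never leaves
  the triangle.\<close>

lemma is_cycle_through_triangle:
  assumes cycle: "is_cycle W D" and "T \<subseteq> W" "card T = 3" "tri_edges T \<subseteq> D"
  shows "card D \<le> 3"
proof -
  have closed: "y \<in> T" if "x \<in> T" "{x, y} \<in> D" for x y
  proof -
    have "finite T" using assms(3) by (metis card_ge_0_finite zero_less_numeral)
    then have "card (T - {x}) = 2" using assms(3) that(1) by (simp add: card_Diff_singleton)
    then obtain o1 o2 where o: "T - {x} = {o1, o2}" "o1 \<noteq> o2" by (meson card_2_iff)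
    then have o_in: "o1 \<in> T" "o2 \<in> T" "o1 \<noteq> x" "o2 \<noteq> x" by blast+
    then have "{x, o1} \<in> D" "{x, o2} \<in> D"
      using assms(4) that(1) unfolding tri_edges_def by auto
    then have at_x: "{e \<in> D. x \<in> e} = {{x, o1}, {x, o2}}"
      by (intro is_cycle_edges_at_vertex[OF cycle _ _ _ o(2)]) (use that(1) assms(2) in auto)
    have "{x, y} \<in> {e \<in> D. x \<in> e}" using that(2) by simp
    then have "{x, y} = {x, o1} \<or> {x, y} = {x, o2}" unfolding at_x by simp
    then show "y \<in> T" using o_in that(1) by (auto simp: doubleton_eq_iff)
  qed
  obtain x y z where T: "T = {x, y, z}" "x \<noteq> y" "y \<noteq> z" "x \<noteq> z"
    using assms(3) by (meson card_3_iff)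
  have cg: "connected_graph W D" and edges: "\<forall>e\<in>D. e \<subseteq> W \<and> card e = 2"
    using cycle unfolding is_cycle_def by auto
  have "W \<subseteq> T"
    by (rule connected_graph_closed_subset[OF cg _ _ closed, where a = x]) (use T(1) assms(2) in auto)
  then have D_sub: "D \<subseteq> tri_edges T" using edges unfolding tri_edges_def by blast
  have "tri_edges T = set [{x, y}, {x, z}, {y, z}]" using T by (simp add: tri_edges_triple)
  then have "finite (tri_edges T)" "card (tri_edges T) \<le> 3"
    using card_length[of "[{x, y}, {x, z}, {y, z}]"] by simp_all
  then show ?thesis using card_mono[OF _ D_sub] by linarith
qed

section \<open>Plane drawings and their subgraphs\<close>

locale plane_embedding =
  fixes V :: "'v set" and E :: "'v set set" and pos :: "'v \<Rightarrow> complex"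
    and c :: "'v set \<Rightarrow> real \<Rightarrow> complex"
  assumes plane: "plane_graph V E pos c"
begin

lemma finite_vertices: "finite V"
  using plane unfolding plane_graph_def by blast

lemma edge_subset: "e \<in> E \<Longrightarrow> e \<subseteq> V"
  using plane unfolding plane_graph_def by blast

lemma card_edge: "e \<in> E \<Longrightarrow> card e = 2"
  using plane unfolding plane_graph_def by blast

lemma inj_pos: "inj_on pos V"
  using plane unfolding plane_graph_def by blast

lemma arc_edge: "e \<in> E \<Longrightarrow> arc (c e)"
  using plane unfolding plane_graph_def by blast

lemma arc_ends: "e \<in> E \<Longrightarrow> {pathstart (c e), pathfinish (c e)} = pos ` e"
  using plane unfolding plane_graph_def by blast

lemma arc_Int_vertices: "e \<in> E \<Longrightarrow> path_image (c e) \<inter> pos ` V = pos ` e"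
  using plane unfolding plane_graph_def by blast

lemma arcs_Int:
  "e \<in> E \<Longrightarrow> e' \<in> E \<Longrightarrow> e \<noteq> e' \<Longrightarrow> path_image (c e) \<inter> path_image (c e') = pos ` (e \<inter> e')"
  using plane unfolding plane_graph_def by blast

lemma finite_edges: "finite E"
  using edge_subset finite_vertices by (meson Pow_iff finite_Pow_iff finite_subset subsetI)

lemma pos_eq_iff: "x \<in> V \<Longrightarrow> y \<in> V \<Longrightarrow> pos x = pos y \<longleftrightarrow> x = y"
  using inj_pos by (meson inj_on_eq_iff)

lemma pos_in_arc_iff: "e \<in> E \<Longrightarrow> x \<in> V \<Longrightarrow> pos x \<in> path_image (c e) \<longleftrightarrow> x \<in> e"
  using arc_Int_vertices edge_subset pos_eq_iff by blast

lemma pos_in_arc: "e \<in> E \<Longrightarrow> x \<in> e \<Longrightarrow> pos x \<in> path_image (c e)"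
  using arc_Int_vertices by blast

lemma compact_arc: "e \<in> E \<Longrightarrow> compact (path_image (c e))"
  using arc_edge arc_imp_path compact_path_image by blast

lemma connected_arc: "e \<in> E \<Longrightarrow> connected (path_image (c e))"
  using arc_edge arc_imp_path connected_path_image by blast

definition arc_interior :: "'v set \<Rightarrow> complex set" where
  "arc_interior e = path_image (c e) - pos ` e"

lemma arc_interior_notin_vertices: "e \<in> E \<Longrightarrow> p \<in> arc_interior e \<Longrightarrow> p \<notin> pos ` V"
  using arc_Int_vertices unfolding arc_interior_def by blast

lemma arc_interior_notin_arc:
  "e \<in> E \<Longrightarrow> e' \<in> E \<Longrightarrow> e \<noteq> e' \<Longrightarrow> p \<in> arc_interior e \<Longrightarrow> p \<notin> path_image (c e')"
  using arcs_Int unfolding arc_interior_def by blast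

lemma midpoint_in_arc_interior: "e \<in> E \<Longrightarrow> c e (1/2) \<in> arc_interior e"
proof -
  assume e: "e \<in> E"
  then have inj: "inj_on (c e) {0..1}" using arc_edge by (simp add: arc_def)
  have "c e (1/2) \<noteq> c e 0" "c e (1/2) \<noteq> c e 1"
    using inj_onD[OF inj, of "1/2" 0] inj_onD[OF inj, of "1/2" 1] by auto
  moreover have "pos ` e = {c e 0, c e 1}"
    using arc_ends[OF e] unfolding pathstart_def pathfinish_def by simp
  ultimately show ?thesis unfolding arc_interior_def path_image_def by auto
qed

definition subgraph :: "'v set \<Rightarrow> 'v set set \<Rightarrow> bool" where
  "subgraph W D \<longleftrightarrow> W \<subseteq> V \<and> D \<subseteq> E \<and> (\<forall>e\<in>D. e \<subseteq> W)"

lemma subgraph_minus: "subgraph W D \<Longrightarrow> subgraph (W - U) {e \<in> D. e \<inter> U = {}}"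
  unfolding subgraph_def by blast

lemma subgraph_finite: "subgraph W D \<Longrightarrow> finite W \<and> finite D"
  unfolding subgraph_def using finite_vertices finite_edges finite_subset by meson

lemma compact_drawing:
  assumes "subgraph W D"
  shows "compact (drawing W D pos c)"
proof -
  have "finite W" "finite D" "D \<subseteq> E" using assms subgraph_finite unfolding subgraph_def by auto
  have "compact (pos ` W)" using \<open>finite W\<close> by (simp add: finite_imp_compact)
  moreover have "compact (\<Union>e\<in>D. path_image (c e))"
    using \<open>finite D\<close> \<open>D \<subseteq> E\<close> compact_arc by (intro compact_UN) auto
  ultimately show ?thesis unfolding drawing_def by (rule compact_Un)
qed

lemma drawing_mono: "W \<subseteq> W' \<Longrightarrow> D \<subseteq> D' \<Longrightarrow> drawing W D pos c \<subseteq> drawing W' D' pos c"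
  unfolding drawing_def by blast

lemma drawing_cases:
  assumes "subgraph W D" "p \<in> drawing W D pos c"
  obtains x where "x \<in> W" "p = pos x" | e where "e \<in> D" "p \<in> arc_interior e"
proof -
  consider "p \<in> pos ` W" | e where "e \<in> D" "p \<in> path_image (c e)"
    using assms(2) unfolding drawing_def by blast
  then show ?thesis
  proof cases
    case 1
    then show ?thesis using that(1) by blast
  next
    case (2 e)
    show ?thesis
    proof (cases "p \<in> pos ` e")
      case True
      then show ?thesis using that(1) 2 assms(1) unfolding subgraph_def by blast
    next
      case False
      then show ?thesis using that(2) 2 unfolding arc_interior_def by blast
    qed
  qed
qed

lemma pos_in_drawing_iff:
  assumes "subgraph W D" "x \<in> V"
  shows "pos x \<in> drawing W D pos c \<longleftrightarrow> x \<in> W"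
proof
  assume "pos x \<in> drawing W D pos c"
  with assms(1) show "x \<in> W"
  proof (cases rule: drawing_cases)
    case (1 y)
    then show ?thesis using assms pos_eq_iff unfolding subgraph_def by blast
  next
    case (2 e)
    then show ?thesis using assms arc_interior_notin_vertices unfolding subgraph_def by blast
  qed
qed (simp add: drawing_def)

lemma arc_interior_in_drawing_iff:
  assumes "subgraph W D" "e \<in> E" "p \<in> arc_interior e"
  shows "p \<in> drawing W D pos c \<longleftrightarrow> e \<in> D"
proof
  assume "p \<in> drawing W D pos c"
  with assms(1) show "e \<in> D"
  proof (cases rule: drawing_cases)
    case (1 x)
    then show ?thesis using assms arc_interior_notin_vertices unfolding subgraph_def by blast
  next
    case (2 e')
    then have "p \<in> path_image (c e')" unfolding arc_interior_def by blast
    then show ?thesis using 2 assms arc_interior_notin_arc unfolding subgraph_def by blast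
  qed
next
  assume "e \<in> D"
  then show "p \<in> drawing W D pos c" using assms(3) unfolding drawing_def arc_interior_def by blast
qed

lemma drawing_subset_imp_subgraph:
  assumes "subgraph W D" "subgraph W' D'" "drawing W D pos c \<subseteq> drawing W' D' pos c"
  shows "W \<subseteq> W'" "D \<subseteq> D'"
proof -
  show "W \<subseteq> W'"
  proof
    fix x assume "x \<in> W"
    then have "x \<in> V" "pos x \<in> drawing W D pos c"
      using assms(1) unfolding subgraph_def drawing_def by auto
    then show "x \<in> W'" using assms(3) pos_in_drawing_iff[OF assms(2)] by blast
  qed
  show "D \<subseteq> D'"
  proof
    fix e assume "e \<in> D"
    then have "e \<in> E" using assms(1) unfolding subgraph_def by blast
    note mid = midpoint_in_arc_interior[OF this]
    have "c e (1/2) \<in> drawing W D pos c"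
      using arc_interior_in_drawing_iff[OF assms(1) \<open>e \<in> E\<close> mid] \<open>e \<in> D\<close> by blast
    then show "e \<in> D'"
      using arc_interior_in_drawing_iff[OF assms(2) \<open>e \<in> E\<close> mid] assms(3) by blast
  qed
qed

lemma drawing_eq_imp_eq:
  assumes "subgraph W D" "subgraph W' D'" "drawing W D pos c = drawing W' D' pos c"
  shows "W = W'" "D = D'"
proof -
  have "W \<subseteq> W'" "D \<subseteq> D'" using drawing_subset_imp_subgraph[OF assms(1,2)] assms(3) by simp_all
  moreover have "W' \<subseteq> W" "D' \<subseteq> D" using drawing_subset_imp_subgraph[OF assms(2,1)] assms(3) by simp_all
  ultimately show "W = W'" "D = D'" by auto
qed

definition drawing_minus :: "'v set \<Rightarrow> 'v set \<Rightarrow> 'v set set \<Rightarrow> complex set" where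
  "drawing_minus U W D = drawing (W - U) {e \<in> D. e \<inter> U = {}} pos c"

lemma drawing_minus_subset: "drawing_minus U W D \<subseteq> drawing W D pos c"
  unfolding drawing_minus_def by (rule drawing_mono) auto

lemma compact_drawing_minus: "subgraph W D \<Longrightarrow> compact (drawing_minus U W D)"
  unfolding drawing_minus_def by (intro compact_drawing subgraph_minus)

lemma pos_notin_drawing_minus:
  "subgraph W D \<Longrightarrow> u \<in> U \<Longrightarrow> u \<in> V \<Longrightarrow> pos u \<notin> drawing_minus U W D"
  unfolding drawing_minus_def using pos_in_drawing_iff[OF subgraph_minus] by blast

lemma drawing_minus_Int:
  assumes "subgraph W D"
  shows "drawing_minus U W D \<inter> drawing_minus U' W D = drawing_minus (U \<union> U') W D"
proof
  show "drawing_minus (U \<union> U') W D \<subseteq> drawing_minus U W D \<inter> drawing_minus U' W D"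
    unfolding drawing_minus_def by (intro Int_greatest drawing_mono) auto
  show "drawing_minus U W D \<inter> drawing_minus U' W D \<subseteq> drawing_minus (U \<union> U') W D"
  proof
    fix p assume p: "p \<in> drawing_minus U W D \<inter> drawing_minus U' W D"
    note minus = subgraph_minus[OF assms]
    from p have "p \<in> drawing W D pos c" using drawing_minus_subset by blast
    with assms show "p \<in> drawing_minus (U \<union> U') W D"
    proof (cases rule: drawing_cases)
      case (1 x)
      then have "x \<in> V" using assms unfolding subgraph_def by blast
      then show ?thesis using p 1 pos_in_drawing_iff[OF minus] unfolding drawing_minus_def by auto
    next
      case (2 e)
      then have "e \<in> E" using assms unfolding subgraph_def by blast
      then show ?thesis
        using p 2 arc_interior_in_drawing_iff[OF minus] unfolding drawing_minus_def by auto
    qed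
  qed
qed

lemma drawing_subset_minus_Un:
  assumes "subgraph W D" "u \<noteq> v"
  shows "drawing W D pos c \<subseteq>
    drawing_minus {u} W D \<union> drawing_minus {v} W D \<union> (\<Union>e \<in> D \<inter> {{u, v}}. path_image (c e))"
proof
  fix p assume "p \<in> drawing W D pos c"
  with assms(1) show "p \<in> drawing_minus {u} W D \<union> drawing_minus {v} W D \<union>
    (\<Union>e \<in> D \<inter> {{u, v}}. path_image (c e))"
  proof (cases rule: drawing_cases)
    case (1 x)
    then show ?thesis using assms(2) unfolding drawing_minus_def drawing_def by (cases "x = u") auto
  next
    case (2 e)
    then obtain a b where ab: "e = {a, b}" "a \<noteq> b"
      using assms(1) card_edge unfolding subgraph_def by (meson card_2_iff subsetD)
    show ?thesis
    proof (cases "e = {u, v}")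
      case True
      then show ?thesis using 2 unfolding arc_interior_def by auto
    next
      case False
      then have "u \<notin> e \<or> v \<notin> e" using ab assms(2) by (auto simp: doubleton_eq_iff)
      then show ?thesis using 2 unfolding drawing_minus_def drawing_def arc_interior_def by auto
    qed
  qed
qed

lemma arc_Int_drawing_minus:
  assumes "subgraph W D" "{u, v} \<in> E" "u \<noteq> v"
    and "p \<in> path_image (c {u, v})" "p \<in> drawing_minus {u} W D"
  shows "p = pos v"
  using subgraph_minus[OF assms(1)] assms(5) unfolding drawing_minus_def
proof (cases rule: drawing_cases)
  case (1 x)
  then have "x \<in> V" using assms(1) unfolding subgraph_def by blast
  then show ?thesis using 1 assms(2,4) pos_in_arc_iff by auto
next
  case (2 e)
  then have "e \<in> E" "e \<noteq> {u, v}" using assms(1) unfolding subgraph_def by auto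
  then show ?thesis using 2 assms(2,4) arc_interior_notin_arc by blast
qed

lemma open_face: "subgraph W D \<Longrightarrow> f \<in> faces W D pos c \<Longrightarrow> open f"
  unfolding faces_def by (meson compact_drawing compact_imp_closed open_Compl open_components)

lemma face_subset: "f \<in> faces W D pos c \<Longrightarrow> f \<subseteq> - drawing W D pos c"
  unfolding faces_def by (rule in_components_subset)

lemma subgraph_whole: "subgraph V E"
  unfolding subgraph_def using edge_subset by blast

lemma facial_triangle_subgraph:
  assumes "facial_triangle V E pos c T"
  shows "subgraph T (tri_edges T)" "card T = 3"
proof -
  have "T \<subseteq> V" "tri_edges T \<subseteq> E" "card T = 3"
    using assms unfolding facial_triangle_def facial_cycle_def by auto
  moreover have "\<forall>e\<in>tri_edges T. e \<subseteq> T" by (simp add: tri_edges_def)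
  ultimately show "subgraph T (tri_edges T)" "card T = 3" unfolding subgraph_def by blast+
qed

text \<open>If t meets f then t \<subseteq> f, so the boundary of t lies in that of f, and a cycle through a
  triangle is the triangle itself.\<close>

lemma triangle_face_disjoint_long_face:
  assumes T: "facial_triangle V E pos c T" and t: "t \<in> faces V E pos c"
    and t_frontier: "frontier t = drawing T (tri_edges T) pos c"
    and sub: "subgraph W D" "T \<subseteq> W" "tri_edges T \<subseteq> D"
    and f: "f \<in> faces W D pos c" and f_frontier: "frontier f = drawing W' D' pos c"
    and cycle: "is_cycle W' D'" "subgraph W' D'" "card D' \<ge> 4"
  shows "t \<inter> f = {}"
proof (rule ccontr)
  assume meet: "t \<inter> f \<noteq> {}"
  have "drawing W D pos c \<subseteq> drawing V E pos c"
    using sub(1) unfolding subgraph_def by (intro drawing_mono) auto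
  then have "t \<subseteq> - drawing W D pos c" using face_subset[OF t] by blast
  moreover have "connected t" using t unfolding faces_def by (rule in_components_connected)
  ultimately have "t \<subseteq> f"
    using components_maximal[of f "- drawing W D pos c" t] f meet unfolding faces_def by blast
  then have "closure t \<subseteq> closure f" by (rule closure_mono)
  moreover have "frontier t \<subseteq> closure t" by (simp add: frontier_def)
  moreover have "frontier t \<subseteq> drawing W D pos c"
    unfolding t_frontier using sub(2,3) by (rule drawing_mono)
  moreover have "f \<subseteq> - drawing W D pos c" by (rule face_subset[OF f])
  ultimately have "frontier t \<subseteq> closure f - f" by blast
  also have "closure f - f = frontier f"
    using open_face[OF sub(1) f] by (simp add: frontier_def interior_open)
  finally have "drawing T (tri_edges T) pos c \<subseteq> drawing W' D' pos c"
    using t_frontier f_frontier by simp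
  then have "T \<subseteq> W'" "tri_edges T \<subseteq> D'"
    using drawing_subset_imp_subgraph[OF facial_triangle_subgraph(1)[OF T] cycle(2)] by simp_all
  then have "card D' \<le> 3"
    using is_cycle_through_triangle[OF cycle(1) _ facial_triangle_subgraph(2)[OF T]] by blast
  then show False using cycle(3) by simp
qed

lemma face_accesses_arc_interior:
  assumes t: "t \<in> faces V E pos c" and t_frontier: "frontier t = drawing W D pos c"
    and sub: "subgraph W D" and e: "e \<in> D"
  obtains q z where "q \<in> t" "z \<in> arc_interior e" "closed_segment q z \<subseteq> insert z t"
proof -
  have "e \<in> E" using sub e unfolding subgraph_def by blast
  define m where "m = c e (1/2)"
  have m: "m \<in> arc_interior e" unfolding m_def by (rule midpoint_in_arc_interior[OF \<open>e \<in> E\<close>])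
  have sub_rest: "subgraph W (D - {e})" using sub unfolding subgraph_def by blast
  then have "m \<notin> drawing W (D - {e}) pos c"
    using arc_interior_in_drawing_iff[OF sub_rest \<open>e \<in> E\<close> m] by blast
  then obtain r where "r > 0" and r: "ball m r \<subseteq> - drawing W (D - {e}) pos c"
    using compact_drawing[OF sub_rest]
    by (meson ComplI compact_imp_closed open_Compl open_contains_ball)
  have "m \<in> frontier t"
    using m e unfolding t_frontier drawing_def arc_interior_def by blast
  then obtain q z where qz: "q \<in> t" "z \<in> frontier t" "z \<in> ball m r" "closed_segment q z \<subseteq> insert z t"
    using open_frontier_segment_access[OF open_face[OF subgraph_whole t] _ \<open>r > 0\<close>] by blast
  have "z \<in> drawing W D pos c" "z \<notin> drawing W (D - {e}) pos c" using qz(2,3) r t_frontier by auto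
  then have "z \<in> path_image (c e)" "z \<notin> pos ` W" unfolding drawing_def by auto
  moreover have "e \<subseteq> W" using sub e unfolding subgraph_def by blast
  ultimately have "z \<in> arc_interior e" unfolding arc_interior_def by blast
  then show ?thesis using that qz(1,4) by blast
qed

lemma triangle_face_continuum:
  assumes T: "facial_triangle V E pos c {u, v, w}" "u \<noteq> v" "v \<noteq> w" "u \<noteq> w"
    and t: "t \<in> faces V E pos c"
    and t_frontier: "frontier t = drawing {u, v, w} (tri_edges {u, v, w}) pos c"
  obtains K where "compact K" "connected K" "pos w \<in> K" "c {u, v} (1/2) \<in> K"
    "pos u \<notin> K" "pos v \<notin> K"
    "K \<subseteq> path_image (c {v, w}) \<union> path_image (c {u, v}) \<union> t"
proof -
  have sub: "subgraph {u, v, w} (tri_edges {u, v, w})" using facial_triangle_subgraph[OF T(1)] by blast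
  have "{u, v} \<in> tri_edges {u, v, w}" "{v, w} \<in> tri_edges {u, v, w}"
    using T(2-4) by (simp_all add: tri_edges_triple)
  then have uv: "{u, v} \<in> E" and vw: "{v, w} \<in> E" using sub unfolding subgraph_def by auto
  obtain q1 z1 where q1: "q1 \<in> t" "z1 \<in> arc_interior {v, w}" "closed_segment q1 z1 \<subseteq> insert z1 t"
    using face_accesses_arc_interior[OF t t_frontier sub \<open>{v, w} \<in> tri_edges _\<close>] by blast
  obtain q2 z2 where q2: "q2 \<in> t" "z2 \<in> arc_interior {u, v}" "closed_segment q2 z2 \<subseteq> insert z2 t"
    using face_accesses_arc_interior[OF t t_frontier sub \<open>{u, v} \<in> tri_edges _\<close>] by blast
  have "path_connected t"
    using t open_face[OF subgraph_whole t] unfolding faces_def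
    by (meson connected_open_path_connected in_components_connected)
  then obtain g where g: "path g" "path_image g \<subseteq> t" "pathstart g = q1" "pathfinish g = q2"
    using q1(1) q2(1) unfolding path_connected_def by blast
  define m where "m = c {u, v} (1/2)"
  have m: "m \<in> arc_interior {u, v}" unfolding m_def by (rule midpoint_in_arc_interior[OF uv])
  obtain K1 where K1: "compact K1" "connected K1" "pos w \<in> K1" "z1 \<in> K1" "K1 \<subseteq> path_image (c {v, w})"
    "K1 \<inter> {pathstart (c {v, w}), pathfinish (c {v, w})} \<subseteq> {pos w, z1}"
    using arc_subcontinuum[OF arc_edge[OF vw] pos_in_arc[OF vw] , of w z1] q1(2)
    unfolding arc_interior_def by blast
  obtain K2 where K2: "compact K2" "connected K2" "z2 \<in> K2" "m \<in> K2" "K2 \<subseteq> path_image (c {u, v})"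
    "K2 \<inter> {pathstart (c {u, v}), pathfinish (c {u, v})} \<subseteq> {z2, m}"
    using arc_subcontinuum[OF arc_edge[OF uv], of z2 m] q2(2) m unfolding arc_interior_def by blast
  define K where "K = K1 \<union> closed_segment q1 z1 \<union> path_image g \<union> closed_segment q2 z2 \<union> K2"
  have avoid: "pos x \<notin> K" if "x \<in> V" "pos x \<notin> K1" "pos x \<notin> K2" for x
  proof -
    have "pos x \<notin> t" using face_subset[OF t] that(1) unfolding drawing_def by blast
    moreover have "z1 \<noteq> pos x" "z2 \<noteq> pos x"
      using arc_interior_notin_vertices[OF vw q1(2)] arc_interior_notin_vertices[OF uv q2(2)] that(1)
      by auto
    ultimately show ?thesis using that q1(3) q2(3) g(2) unfolding K_def by blast
  qed
  have V: "u \<in> V" "v \<in> V" using uv edge_subset by auto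
  have ends: "pos v \<in> {pathstart (c {v, w}), pathfinish (c {v, w})}"
    "pos u \<in> {pathstart (c {u, v}), pathfinish (c {u, v})}"
    "pos v \<in> {pathstart (c {u, v}), pathfinish (c {u, v})}"
    using arc_ends[OF vw] arc_ends[OF uv] by auto
  have interior_not_pos: "pos u \<notin> arc_interior {u, v}" "pos v \<notin> arc_interior {u, v}"
    "pos v \<notin> arc_interior {v, w}"
    unfolding arc_interior_def by auto
  show ?thesis
  proof (rule that[of K])
    show "compact K"
      unfolding K_def using K1(1) K2(1) g(1) by (intro compact_Un compact_segment compact_path_image)
    show "connected K" unfolding K_def
      using K1(2,4) K2(2,3) g q1 q2
      by (intro connected_Un connected_segment connected_path_image) (auto simp: disjoint_iff)
    show "pos w \<in> K" "c {u, v} (1/2) \<in> K" using K1(3) K2(4) unfolding K_def m_def by auto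
    show "K \<subseteq> path_image (c {v, w}) \<union> path_image (c {u, v}) \<union> t"
      using K1(5) K2(5) g(2) q1 q2 unfolding K_def arc_interior_def by blast
    have "pos u \<notin> K1" using K1(5) pos_in_arc_iff[OF vw V(1)] T(2,4) by auto
    moreover have "pos u \<notin> K2" using K2(6) ends(2) q2(2) m interior_not_pos by blast
    ultimately show "pos u \<notin> K" using avoid V(1) by blast
    have "pos v \<noteq> pos w" using pos_eq_iff[of v w] T(3) vw edge_subset by blast
    then have "pos v \<notin> K1" using K1(6) ends(1) q1(2) interior_not_pos by blast
    moreover have "pos v \<notin> K2" using K2(6) ends(3) q2(2) m interior_not_pos by blast
    ultimately show "pos v \<notin> K" using avoid V(2) by blast
  qed
qed

end

section \<open>Triangular blocks\<close>

locale triangle_block = plane_embedding V E pos c for V :: "'v set" and E pos c +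
  fixes e0 :: "'v set"
begin

abbreviation adjacent_triangles :: "'v set \<Rightarrow> 'v set \<Rightarrow> bool" where
  "adjacent_triangles A B \<equiv> facial_triangle V E pos c A \<and> facial_triangle V E pos c B \<and>
     tri_edges A \<inter> tri_edges B \<noteq> {}"

definition block_triangles :: "'v set set" where
  "block_triangles =
     {T'. \<exists>T. facial_triangle V E pos c T \<and> e0 \<in> tri_edges T \<and> tri_equiv V E pos c T T'}"

abbreviation block_vertices :: "'v set" where "block_vertices \<equiv> \<Union> block_triangles"

abbreviation block_edges :: "'v set set" where "block_edges \<equiv> \<Union> (tri_edges ` block_triangles)"

lemma tri_block_eq:
  "\<exists>T. facial_triangle V E pos c T \<and> e0 \<in> tri_edges T \<Longrightarrow>
    tri_block V E pos c e0 = (block_vertices, block_edges)"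
  unfolding tri_block_def block_triangles_def by (simp add: Let_def)

lemma block_triangles_closed:
  "A \<in> block_triangles \<Longrightarrow> adjacent_triangles A B \<Longrightarrow> B \<in> block_triangles"
  unfolding block_triangles_def tri_equiv_def by (auto intro: rtranclp.rtrancl_into_rtrancl)

lemma block_triangle_facial: "T \<in> block_triangles \<Longrightarrow> facial_triangle V E pos c T"
  unfolding block_triangles_def tri_equiv_def
  by (auto elim: rtranclp.cases)

lemma block_triangles_linked:
  assumes "A \<in> block_triangles" "B \<in> block_triangles"
  shows "adjacent_triangles\<^sup>*\<^sup>* A B"
proof -
  obtain TA where TA: "facial_triangle V E pos c TA" "e0 \<in> tri_edges TA" "adjacent_triangles\<^sup>*\<^sup>* TA A"
    using assms(1) unfolding block_triangles_def tri_equiv_def by blast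
  obtain TB where TB: "facial_triangle V E pos c TB" "e0 \<in> tri_edges TB" "adjacent_triangles\<^sup>*\<^sup>* TB B"
    using assms(2) unfolding block_triangles_def tri_equiv_def by blast
  have "e0 \<in> tri_edges TA \<inter> tri_edges TB" using TA(2) TB(2) by blast
  then have TA_TB: "adjacent_triangles TA TB" using TA(1) TB(1) by blast
  have "symp adjacent_triangles" by (rule sympI) (simp add: Int_commute)
  then have "adjacent_triangles\<^sup>*\<^sup>* A TA" by (rule sympD[OF symp_rtranclp TA(3)])
  then have "adjacent_triangles\<^sup>*\<^sup>* A TB" using TA_TB by (rule rtranclp.rtrancl_into_rtrancl)
  then show ?thesis using TB(3) by (rule rtranclp_trans)
qed

lemma subgraph_block: "subgraph block_vertices block_edges"
  using block_triangle_facial facial_triangle_subgraph unfolding subgraph_def by blast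

lemma finite_block_triangles: "finite block_triangles"
proof -
  have "block_triangles \<subseteq> Pow V" using subgraph_block unfolding subgraph_def by blast
  then show ?thesis using finite_vertices by (simp add: finite_subset)
qed

text \<open>The property spreads along the chain of triangles: adjacent triangles share an edge, which
  has an end outside {u, v} unless the second triangle contains both u and v.\<close>

lemma block_vertices_propagate:
  assumes edge_step: "\<And>a b. {a, b} \<in> block_edges \<Longrightarrow> a \<notin> {u, v} \<Longrightarrow> b \<notin> {u, v} \<Longrightarrow> pos a \<in> C \<Longrightarrow> pos b \<in> C"
    and uv_triangles: "\<And>T y. T \<in> block_triangles \<Longrightarrow> {u, v} \<subseteq> T \<Longrightarrow> y \<in> T - {u, v} \<Longrightarrow> pos y \<in> C"
    and start: "Tb \<in> block_triangles" "\<And>y. y \<in> Tb - {u, v} \<Longrightarrow> pos y \<in> C"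
    and T: "T \<in> block_triangles" and y: "y \<in> T - {u, v}"
  shows "pos y \<in> C"
proof -
  have propagate: "\<forall>y\<in>B - {u, v}. pos y \<in> C"
    if A: "A \<in> block_triangles" "adjacent_triangles A B" "\<forall>y\<in>A - {u, v}. pos y \<in> C" for A B
  proof (cases "{u, v} \<subseteq> B")
    case True
    then show ?thesis using uv_triangles block_triangles_closed[OF A(1,2)] by blast
  next
    case False
    obtain ed where "ed \<in> tri_edges A" "ed \<in> tri_edges B" using A(2) by blast
    then have ed: "card ed = 2" "ed \<subseteq> A" "ed \<subseteq> B" unfolding tri_edges_def by auto
    have "\<not> ed \<subseteq> {u, v}"
    proof
      assume "ed \<subseteq> {u, v}"
      moreover have "card {u, v} \<le> card ed" using ed(1) card_length[of "[u, v]"] by simp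
      ultimately have "ed = {u, v}" by (intro card_seteq) auto
      then show False using False ed(3) by blast
    qed
    then obtain x where x: "x \<in> A \<inter> B" "x \<notin> {u, v}" using ed(2,3) by blast
    then have "pos x \<in> C" using A(3) by blast
    have "B \<in> block_triangles" by (rule block_triangles_closed[OF A(1,2)])
    have "pos y \<in> C" if "y \<in> B - {u, v}" for y
    proof (cases "y = x")
      case False
      then have "{x, y} \<in> block_edges" using x that \<open>B \<in> block_triangles\<close> unfolding tri_edges_def by auto
      then show ?thesis using edge_step x that \<open>pos x \<in> C\<close> by blast
    qed (use \<open>pos x \<in> C\<close> in simp)
    then show ?thesis by blast
  qed
  have "adjacent_triangles\<^sup>*\<^sup>* Tb T" by (rule block_triangles_linked[OF start(1) T])
  then have "T \<in> block_triangles \<and> (\<forall>y\<in>T - {u, v}. pos y \<in> C)"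
  proof induction
    case base
    then show ?case using start by blast
  next
    case (step A B)
    then show ?case using block_triangles_closed[of A B] propagate[of A B] by blast
  qed
  then show ?thesis using y by blast
qed

lemma connected_drawing_minus_Un:
  assumes P: "connected P" "P = {} \<or> pos y0 \<in> P"
    and start: "Tb \<in> block_triangles" "y0 \<in> Tb - {u, v}"
    and third: "\<And>T y. T \<in> block_triangles \<Longrightarrow> {u, v} \<subseteq> T \<Longrightarrow> y \<in> T - {u, v} \<Longrightarrow> pos y \<in> P"
  shows "connected (drawing_minus {u, v} block_vertices block_edges \<union> P)"
proof -
  define X where "X = drawing_minus {u, v} block_vertices block_edges \<union> P"
  define C where "C = connected_component_set X (pos y0)"
  have arc_in_C: "path_image (c e) \<subseteq> C"
    if e: "e \<in> block_edges" "e \<inter> {u, v} = {}" "a \<in> e" "pos a \<in> C" for e a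
  proof -
    have "e \<in> E" using e(1) subgraph_block unfolding subgraph_def by blast
    have "path_image (c e) \<subseteq> X" using e(1,2) unfolding X_def drawing_minus_def drawing_def by blast
    then have "path_image (c e) \<subseteq> connected_component_set X (pos a)"
      using connected_component_maximal connected_arc[OF \<open>e \<in> E\<close>] pos_in_arc[OF \<open>e \<in> E\<close> e(3)]
      by blast
    then show ?thesis using e(4) connected_component_eq unfolding C_def by blast
  qed
  have edge_step: "pos b \<in> C" if "{a, b} \<in> block_edges" "a \<notin> {u, v}" "b \<notin> {u, v}" "pos a \<in> C" for a b
  proof -
    have "{a, b} \<in> E" using that(1) subgraph_block unfolding subgraph_def by blast
    moreover have "{a, b} \<inter> {u, v} = {}" using that(2,3) by auto
    ultimately show ?thesis using arc_in_C[of "{a, b}" a] pos_in_arc[of "{a, b}" b] that(1,4) by blast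
  qed
  have "pos y0 \<in> X" using start unfolding X_def drawing_minus_def drawing_def by blast
  then have y0: "pos y0 \<in> C" unfolding C_def by simp
  have start_C: "pos y \<in> C" if "y \<in> Tb - {u, v}" for y
  proof (cases "y = y0")
    case False
    then have "{y0, y} \<in> block_edges" using start that unfolding tri_edges_def by auto
    then show ?thesis using edge_step start(2) that y0 by blast
  qed (use y0 in simp)
  have "P \<subseteq> C"
  proof (cases "P = {}")
    case False
    then have "pos y0 \<in> P" using P(2) by blast
    then show ?thesis
      using connected_component_maximal[OF _ P(1), of "pos y0" X] unfolding C_def X_def by blast
  qed simp
  then have uv_C: "pos y \<in> C" if "T \<in> block_triangles" "{u, v} \<subseteq> T" "y \<in> T - {u, v}" for T y
    using third[OF that] by blast
  have vertices: "pos y \<in> C" if y: "y \<in> block_vertices - {u, v}" for y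
  proof -
    obtain T where T: "T \<in> block_triangles" "y \<in> T" using y by blast
    have "y \<in> T - {u, v}" using y T(2) by blast
    from block_vertices_propagate[OF edge_step uv_C start(1) start_C T(1) this] show ?thesis .
  qed
  have "X \<subseteq> C"
  proof
    fix x assume "x \<in> X"
    then consider "x \<in> P" | "x \<in> drawing_minus {u, v} block_vertices block_edges" unfolding X_def by blast
    then show "x \<in> C"
    proof cases
      case 1
      then show ?thesis using \<open>P \<subseteq> C\<close> by blast
    next
      case 2
      with subgraph_minus[OF subgraph_block] show ?thesis unfolding drawing_minus_def
      proof (cases rule: drawing_cases)
        case (1 y)
        then show ?thesis using vertices by blast
      next
        case (2 e)
        then have "e \<in> E" using subgraph_block unfolding subgraph_def by blast
        then obtain a where "a \<in> e" using card_edge by fastforce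
        moreover have "e \<subseteq> block_vertices" using 2 subgraph_block unfolding subgraph_def by blast
        ultimately show ?thesis using 2 arc_in_C vertices unfolding arc_interior_def by blast
      qed
    qed
  qed
  then have "X = C" using connected_component_subset unfolding C_def by blast
  then show ?thesis using connected_connected_component unfolding X_def C_def by metis
qed

lemma faces_eq_if_share_nonadjacent_vertices:
  assumes "block_triangles \<noteq> {}"
    and f: "f1 \<in> faces block_vertices block_edges pos c" "f2 \<in> faces block_vertices block_edges pos c"
    and uv: "u \<in> block_vertices" "v \<in> block_vertices" "u \<noteq> v" "{u, v} \<notin> block_edges"
    and closure: "pos u \<in> closure f1 \<inter> closure f2" "pos v \<in> closure f1 \<inter> closure f2"
  shows "f1 = f2"
proof -
  define Du where "Du = drawing_minus {u} block_vertices block_edges"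
  define Dv where "Dv = drawing_minus {v} block_vertices block_edges"
  obtain Tb where Tb: "Tb \<in> block_triangles" using assms(1) by auto
  have "\<not> Tb \<subseteq> {u, v}"
    by (rule card_3_not_subset_pair[OF facial_triangle_subgraph(2)[OF block_triangle_facial[OF Tb]]])
  then obtain y0 where y0: "y0 \<in> Tb - {u, v}" by blast
  have no_uv_triangle: "\<not> {u, v} \<subseteq> T" if "T \<in> block_triangles" for T
  proof
    assume "{u, v} \<subseteq> T"
    then have "{u, v} \<in> tri_edges T" using uv(3) unfolding tri_edges_def by simp
    then show False using uv(4) that by blast
  qed
  have "connected (drawing_minus {u, v} block_vertices block_edges \<union> {})"
    by (rule connected_drawing_minus_Un[OF connected_empty _ Tb y0]) (use no_uv_triangle in auto)
  then have connected: "connected (Du \<inter> Dv)"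
    using drawing_minus_Int[OF subgraph_block, of "{u}" "{v}"] unfolding Du_def Dv_def
    by (simp add: insert_commute)
  have cover: "drawing block_vertices block_edges pos c \<subseteq> Du \<union> Dv"
    using drawing_subset_minus_Un[OF subgraph_block uv(3)] uv(4) unfolding Du_def Dv_def by auto
  have "u \<in> V" "v \<in> V" using uv(1,2) subgraph_block unfolding subgraph_def by auto
  then have avoid: "pos u \<notin> Du" "pos v \<notin> Dv"
    using pos_notin_drawing_minus[OF subgraph_block] unfolding Du_def Dv_def by auto
  have disjoint: "(Du \<union> Dv) \<inter> (f1 \<union> f2) = {}"
    using drawing_minus_subset face_subset[OF f(1)] face_subset[OF f(2)] unfolding Du_def Dv_def by blast
  have compact: "compact Du" "compact Dv"
    unfolding Du_def Dv_def by (simp_all add: compact_drawing_minus[OF subgraph_block])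
  show ?thesis
    using components_eq_by_Janiszewski[OF compact(1) compact_imp_closed[OF compact(2)] connected cover
        f[unfolded faces_def] _ _ avoid(1) _ _ avoid(2) disjoint] closure by blast
qed

definition block_triangle_faces :: "complex set set" where
  "block_triangle_faces =
     {t \<in> faces V E pos c. \<exists>T\<in>block_triangles. frontier t = drawing T (tri_edges T) pos c}"

lemma edge_triangles_continuum:
  assumes uv: "{u, v} \<in> block_edges" "u \<noteq> v"
  obtains P where "compact P" "connected P" "c {u, v} (1/2) \<in> P" "pos u \<notin> P" "pos v \<notin> P"
    "\<And>T y. T \<in> block_triangles \<Longrightarrow> {u, v} \<subseteq> T \<Longrightarrow> y \<in> T - {u, v} \<Longrightarrow> pos y \<in> P"
    "P \<subseteq> drawing block_vertices block_edges pos c \<union> \<Union>block_triangle_faces"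
proof -
  define m where "m = c {u, v} (1/2)"
  let ?R = "drawing block_vertices block_edges pos c \<union> \<Union>block_triangle_faces"
  define UT where "UT = {T \<in> block_triangles. {u, v} \<subseteq> T}"
  have "\<exists>K. compact K \<and> connected K \<and> m \<in> K \<and> pos u \<notin> K \<and> pos v \<notin> K \<and>
      (\<forall>y\<in>T - {u, v}. pos y \<in> K) \<and> K \<subseteq> ?R" if T: "T \<in> UT" for T
  proof -
    have T_block: "T \<in> block_triangles" and "{u, v} \<subseteq> T" using T unfolding UT_def by auto
    note facial = block_triangle_facial[OF T_block]
    obtain w where "T = {u, v, w}" "w \<notin> {u, v}"
      using card_3_eq_insert_pair facial_triangle_subgraph(2)[OF facial] \<open>{u, v} \<subseteq> T\<close> uv(2) by metis
    then have w: "w \<in> T" "w \<noteq> u" "w \<noteq> v" by auto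
    obtain t where t: "t \<in> faces V E pos c" "frontier t = drawing T (tri_edges T) pos c"
      using facial unfolding facial_triangle_def facial_cycle_def by blast
    have tri: "facial_triangle V E pos c {u, v, w}"
      "frontier t = drawing {u, v, w} (tri_edges {u, v, w}) pos c"
      using facial t(2) \<open>T = {u, v, w}\<close> by simp_all
    obtain K where K: "compact K" "connected K" "pos w \<in> K" "m \<in> K" "pos u \<notin> K" "pos v \<notin> K"
      "K \<subseteq> path_image (c {v, w}) \<union> path_image (c {u, v}) \<union> t"
      using triangle_face_continuum[OF tri(1) uv(2) w(3)[symmetric] w(2)[symmetric] t(1) tri(2)]
      unfolding m_def by blast
    have "{v, w} \<in> tri_edges T" "{u, v} \<in> tri_edges T"
      using tri_edges_triple[OF uv(2) w(3)[symmetric] w(2)[symmetric]] \<open>T = {u, v, w}\<close> by auto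
    then have "path_image (c {v, w}) \<union> path_image (c {u, v}) \<subseteq> drawing block_vertices block_edges pos c"
      using T_block unfolding drawing_def by blast
    moreover have "t \<in> block_triangle_faces" using t T_block unfolding block_triangle_faces_def by blast
    ultimately have "K \<subseteq> ?R" using K(7) by blast
    moreover have "\<forall>y\<in>T - {u, v}. pos y \<in> K" using \<open>T = {u, v, w}\<close> K(3) by auto
    ultimately show ?thesis using K by blast
  qed
  then obtain K where K: "\<And>T. T \<in> UT \<Longrightarrow> compact (K T) \<and> connected (K T) \<and> m \<in> K T \<and>
      pos u \<notin> K T \<and> pos v \<notin> K T \<and> (\<forall>y\<in>T - {u, v}. pos y \<in> K T) \<and> K T \<subseteq> ?R"
    by metis
  have "finite UT" unfolding UT_def using finite_block_triangles by simp
  have m: "m \<in> arc_interior {u, v}" "{u, v} \<in> E"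
    unfolding m_def using uv(1) subgraph_block midpoint_in_arc_interior unfolding subgraph_def by auto
  show ?thesis
  proof (rule that[of "\<Union>(insert {m} (K ` UT))"])
    show "compact (\<Union>(insert {m} (K ` UT)))" using K \<open>finite UT\<close> by (intro compact_Union) auto
    show "connected (\<Union>(insert {m} (K ` UT)))" using K by (intro connected_Union) auto
    show "c {u, v} (1/2) \<in> \<Union>(insert {m} (K ` UT))" unfolding m_def by simp
    have "m \<noteq> pos u" "m \<noteq> pos v"
      using arc_interior_notin_vertices[OF m(2,1)] m(2) edge_subset by auto
    then show "pos u \<notin> \<Union>(insert {m} (K ` UT))" "pos v \<notin> \<Union>(insert {m} (K ` UT))" using K by auto
    show "pos y \<in> \<Union>(insert {m} (K ` UT))"
      if "T \<in> block_triangles" "{u, v} \<subseteq> T" "y \<in> T - {u, v}" for T y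
      using K[of T] that unfolding UT_def by blast
    have "m \<in> ?R" using m uv(1) unfolding block_triangle_faces_def drawing_def arc_interior_def by blast
    then show "\<Union>(insert {m} (K ` UT)) \<subseteq> ?R" using K by auto
  qed
qed

lemma faces_eq_if_share_edge:
  assumes f: "f1 \<in> faces block_vertices block_edges pos c" "f2 \<in> faces block_vertices block_edges pos c"
    and uv: "{u, v} \<in> block_edges" "u \<noteq> v"
    and closure: "pos u \<in> closure f1 \<inter> closure f2" "pos v \<in> closure f1 \<inter> closure f2"
    and no_triangle_face: "\<Union>block_triangle_faces \<inter> (f1 \<union> f2) = {}"
  shows "f1 = f2"
proof -
  have E: "{u, v} \<in> E" using uv(1) subgraph_block unfolding subgraph_def by blast
  then have V: "u \<in> V" "v \<in> V" using edge_subset by auto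
  obtain P where P: "compact P" "connected P" "c {u, v} (1/2) \<in> P" "pos u \<notin> P" "pos v \<notin> P"
    "\<And>T y. T \<in> block_triangles \<Longrightarrow> {u, v} \<subseteq> T \<Longrightarrow> y \<in> T - {u, v} \<Longrightarrow> pos y \<in> P"
    "P \<subseteq> drawing block_vertices block_edges pos c \<union> \<Union>block_triangle_faces"
    using edge_triangles_continuum[OF uv] by blast
  obtain Au Av where A: "compact Au" "compact Av" "Au \<union> Av = path_image (c {u, v})"
      "Au \<inter> Av = {c {u, v} (1/2)}" "pos v \<notin> Au" "pos u \<notin> Av"
    using arc_split_at_midpoint[OF arc_edge[OF E] arc_ends[OF E, simplified]] by blast
  define Du where "Du = drawing_minus {u} block_vertices block_edges"
  define Dv where "Dv = drawing_minus {v} block_vertices block_edges"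
  \<comment> \<open>The half of the arc avoiding u joins S, the half avoiding v joins T.\<close>
  define S where "S = Du \<union> P \<union> Av"
  define T where "T = Dv \<union> P \<union> Au"
  have "p = pos v" if "p \<in> path_image (c {u, v})" "p \<in> Du" for p
    using arc_Int_drawing_minus[OF subgraph_block E uv(2) that(1)] that(2) unfolding Du_def .
  then have Du_Au: "Du \<inter> Au = {}" using A(3,5) by blast
  have "p = pos u" if "p \<in> path_image (c {u, v})" "p \<in> Dv" for p
    using arc_Int_drawing_minus[OF subgraph_block, of v u p, unfolded insert_commute[of v u]]
      E uv(2) that unfolding Dv_def by blast
  then have Dv_Av: "Dv \<inter> Av = {}" using A(3,6) by blast
  have "Au \<inter> Av \<subseteq> P" using A(4) P(3) by simp
  then have "S \<inter> T = (Du \<inter> Dv) \<union> P" using Du_Au Dv_Av unfolding S_def T_def by blast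
  also have "\<dots> = drawing_minus {u, v} block_vertices block_edges \<union> P"
    using drawing_minus_Int[OF subgraph_block, of "{u}" "{v}"] unfolding Du_def Dv_def
    by (simp add: insert_commute)
  finally have S_T: "S \<inter> T = drawing_minus {u, v} block_vertices block_edges \<union> P" .
  obtain Tb where Tb: "Tb \<in> block_triangles" "{u, v} \<in> tri_edges Tb" using uv(1) by blast
  then have "{u, v} \<subseteq> Tb" unfolding tri_edges_def by simp
  have "\<not> Tb \<subseteq> {u, v}"
    by (rule card_3_not_subset_pair[OF facial_triangle_subgraph(2)[OF block_triangle_facial[OF Tb(1)]]])
  then obtain y0 where y0: "y0 \<in> Tb - {u, v}" by blast
  have "pos y0 \<in> P" by (rule P(6)[OF Tb(1) \<open>{u, v} \<subseteq> Tb\<close> y0])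
  then have connected: "connected (S \<inter> T)"
    unfolding S_T by (intro connected_drawing_minus_Un[OF P(2) _ Tb(1) y0 P(6)]) blast
  have arc: "path_image (c {u, v}) \<subseteq> drawing block_vertices block_edges pos c"
    using uv(1) unfolding drawing_def by blast
  have "(\<Union>e \<in> block_edges \<inter> {{u, v}}. path_image (c e)) = Au \<union> Av" using uv(1) A(3) by auto
  then have cover: "drawing block_vertices block_edges pos c \<subseteq> S \<union> T"
    using drawing_subset_minus_Un[OF subgraph_block uv(2)] unfolding S_def T_def Du_def Dv_def by blast
  have avoid: "pos u \<notin> S" "pos v \<notin> T"
    using pos_notin_drawing_minus[OF subgraph_block] V P(4,5) A(5,6) unfolding S_def T_def Du_def Dv_def
    by auto
  have "S \<union> T \<subseteq> drawing block_vertices block_edges pos c \<union> \<Union>block_triangle_faces"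
    using drawing_minus_subset arc A(3) P(7) unfolding S_def T_def Du_def Dv_def by blast
  then have disjoint: "(S \<union> T) \<inter> (f1 \<union> f2) = {}"
    using no_triangle_face face_subset[OF f(1)] face_subset[OF f(2)] by blast
  have compact: "compact S" "compact T"
    using A(1,2) P(1) compact_drawing_minus[OF subgraph_block] unfolding S_def T_def Du_def Dv_def
    by (auto intro!: compact_Un)
  show ?thesis
    using components_eq_by_Janiszewski[OF compact(1) compact_imp_closed[OF compact(2)] connected cover
        f[unfolded faces_def] _ _ avoid(1) _ _ avoid(2) disjoint] closure by blast
qed

lemma long_face_avoids_triangle_faces:
  assumes "facial_cycle block_vertices block_edges pos c W D" "card D \<ge> 4"
    and f: "f \<in> faces block_vertices block_edges pos c" "frontier f = drawing W D pos c"
  shows "\<Union>block_triangle_faces \<inter> f = {}"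
proof -
  have cycle: "is_cycle W D" "subgraph W D"
    using assms(1) subgraph_block unfolding facial_cycle_def subgraph_def is_cycle_def by auto
  have "t \<inter> f = {}" if t: "t \<in> block_triangle_faces" for t
  proof -
    obtain T where T: "T \<in> block_triangles" "t \<in> faces V E pos c"
      "frontier t = drawing T (tri_edges T) pos c"
      using t unfolding block_triangle_faces_def by blast
    have "T \<subseteq> block_vertices" "tri_edges T \<subseteq> block_edges" using T(1) by blast+
    then show ?thesis
      by (rule triangle_face_disjoint_long_face[OF block_triangle_facial[OF T(1)] T(2,3) subgraph_block
            _ _ f cycle assms(2)])
  qed
  then show ?thesis by blast
qed

lemma long_facial_cycles_share_at_most_one_vertex:
  assumes "block_triangles \<noteq> {}"
    and F1: "facial_cycle block_vertices block_edges pos c W1 D1" "card D1 \<ge> 4"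
    and F2: "facial_cycle block_vertices block_edges pos c W2 D2" "card D2 \<ge> 4"
    and "(W1, D1) \<noteq> (W2, D2)"
  shows "card (W1 \<inter> W2) \<le> 1"
proof (rule ccontr)
  assume "\<not> card (W1 \<inter> W2) \<le> 1"
  moreover have "is_cycle W1 D1" "is_cycle W2 D2" using F1(1) F2(1) unfolding facial_cycle_def by auto
  then have "subgraph W1 D1" "subgraph W2 D2" "finite (W1 \<inter> W2)"
    using F1(1) F2(1) subgraph_block unfolding facial_cycle_def subgraph_def is_cycle_def by auto
  ultimately obtain u v where uv: "u \<in> W1 \<inter> W2" "v \<in> W1 \<inter> W2" "u \<noteq> v"
    using card_le_Suc0_iff_eq by (metis One_nat_def)
  obtain f1 f2
    where f: "f1 \<in> faces block_vertices block_edges pos c" "f2 \<in> faces block_vertices block_edges pos c"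
    and frontier: "frontier f1 = drawing W1 D1 pos c" "frontier f2 = drawing W2 D2 pos c"
    using F1(1) F2(1) unfolding facial_cycle_def by blast
  have "f1 \<noteq> f2"
    using drawing_eq_imp_eq[OF \<open>subgraph W1 D1\<close> \<open>subgraph W2 D2\<close>] frontier assms(6) by auto
  have "pos x \<in> closure f1" if "x \<in> W1" for x
    using that frontier(1) unfolding frontier_def drawing_def by blast
  moreover have "pos x \<in> closure f2" if "x \<in> W2" for x
    using that frontier(2) unfolding frontier_def drawing_def by blast
  ultimately have closure: "pos u \<in> closure f1 \<inter> closure f2" "pos v \<in> closure f1 \<inter> closure f2"
    using uv by auto
  show False
  proof (cases "{u, v} \<in> block_edges")
    case True
    have "\<Union>block_triangle_faces \<inter> (f1 \<union> f2) = {}"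
      using long_face_avoids_triangle_faces[OF F1 f(1) frontier(1)]
        long_face_avoids_triangle_faces[OF F2 f(2) frontier(2)] by blast
    then show False using faces_eq_if_share_edge[OF f True uv(3) closure] \<open>f1 \<noteq> f2\<close> by blast
  next
    case False
    have "u \<in> block_vertices" "v \<in> block_vertices" using uv F1(1) unfolding facial_cycle_def by auto
    then show False
      using faces_eq_if_share_nonadjacent_vertices[OF assms(1) f _ _ uv(3) False closure] \<open>f1 \<noteq> f2\<close>
      by blast
  qed
qed

end

theorem lemma2p4:
  fixes V :: "'v set" and E :: "'v set set"
    and pos :: "'v \<Rightarrow> complex" and c :: "'v set \<Rightarrow> real \<Rightarrow> complex"
  assumes "plane_graph V E pos c"
    and "two_connected V E"
    and "e \<in> E"
    and "tri_block V E pos c e = (VB, EB)"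
    and "facial_cycle VB EB pos c W1 D1"
    and "facial_cycle VB EB pos c W2 D2"
    and "(W1, D1) \<noteq> (W2, D2)"
    and "card D1 \<ge> 4" and "card D2 \<ge> 4"
  shows "card (W1 \<inter> W2) \<le> 1"
proof -
  interpret triangle_block V E pos c e by unfold_locales (rule assms(1))
  show ?thesis
  proof (cases "\<exists>T. facial_triangle V E pos c T \<and> e \<in> tri_edges T")
    case True
    then have "block_triangles \<noteq> {}" unfolding block_triangles_def tri_equiv_def by blast
    moreover have "VB = block_vertices" "EB = block_edges" using tri_block_eq[OF True] assms(4) by auto
    ultimately show ?thesis
      using long_facial_cycles_share_at_most_one_vertex assms(5-9) by blast
  next
    case False
    then have "W1 \<subseteq> e" using assms(4,5) unfolding tri_block_def facial_cycle_def by auto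
    moreover have "finite e" "card e = 2" using card_edge[OF assms(3)] by (auto intro: card_ge_0_finite)
    ultimately have "card W1 \<le> 2" using card_mono by fastforce
    then show ?thesis using assms(5) unfolding facial_cycle_def is_cycle_def by auto
  qed
qed

end
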